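(* Let $\Gamma$ be a Neumaier graph with vertex set $V$ and parameters $(n,k,\lambda;a,c)$. Let $C\subset V$ be a regular clique with nexus $a$, let $e\in C$ be an arbitrary vertex, and let $S$ be the set of neighbours of $e$ in $\Gamma$. Then: (i) The induced subgraph on $S\setminus C$ is regular. Moreover, if the number of neighbours in $S\setminus C$ of a vertex $x\in V\setminus(S\cup\{e\})$ is independent of the choice of $x$, then $\{\{e\},\,C\setminus\{e\},\,S\setminus C,\,V\setminus(S\cup\{e\})\}$ is an equitable partition of $\Gamma$. (ii) If $\Gamma$ is strongly regular, then the number of neighbours in $S\setminus C$ of a vertex $x\in V\setminus(S\cup\{e\})$ is independent of the choice of $x$. (iii) If $\Gamma$ is vertex-transitive, then $\Gamma$ has diameter $2$. Moreover, in this case $\Gamma$ is strongly regular if and only if the number of neighbours in $S\setminus C$ of a vertex $x\in V\setminus(S\cup\{e\})$ is independent of the choice of $x$.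
   Context: All graphs are finite, simple, undirected and connected. A graph is edge-regular with parameters $(n,k,\lambda)$ if it has $n$ vertices, is $k$-regular, and any two adjacent vertices have exactly $\lambda$ common neighbours. A clique $C$ is a regular clique with nexus $a$ if every vertex not in $C$ has exactly $a$ neighbours in $C$. A Neumaier graph is a non-complete edge-regular graph containing a regular clique; in a Neumaier graph all regular cliques have the same size $c$ and nexus $a$, and the graph has parameters $(n,k,\lambda;a,c)$ if it is edge-regular with parameters $(n,k,\lambda)$ and contains a regular clique of size $c$ with nexus $a$. A strongly regular graph with parameters $(n,k,\lambda,\mu)$ is a non-complete connected $k$-regular graph on $n$ vertices in which two adjacent vertices have exactly $\lambda$ common neighbours and two non-adjacent vertices have exactly $\mu$ common neighbours. A partition $\{V_1,\dots,V_m\}$ of the vertex set is equitable if for all $i,j$ the number of neighbours in $V_j$ of a vertex $x\in V_i$ depends only on $i,j$. *)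

theory Defs
  imports "HOL-Library.Disjoint_Sets"
begin

definition graph :: "'a set \<Rightarrow> ('a \<Rightarrow> 'a \<Rightarrow> bool) \<Rightarrow> bool" where
  "graph V E \<longleftrightarrow> finite V \<and> V \<noteq> {} \<and>
     (\<forall>x y. E x y \<longrightarrow> x \<in> V \<and> y \<in> V) \<and>
     (\<forall>x y. E x y \<longrightarrow> E y x) \<and> (\<forall>x. \<not> E x x) \<and>
     (\<forall>x\<in>V. \<forall>y\<in>V. E\<^sup>*\<^sup>* x y)"

definition nbrs :: "'a set \<Rightarrow> ('a \<Rightarrow> 'a \<Rightarrow> bool) \<Rightarrow> 'a \<Rightarrow> 'a set" where
  "nbrs V E x = {y \<in> V. E x y}"

definition complete_graph :: "'a set \<Rightarrow> ('a \<Rightarrow> 'a \<Rightarrow> bool) \<Rightarrow> bool" where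
  "complete_graph V E \<longleftrightarrow> (\<forall>x\<in>V. \<forall>y\<in>V. x \<noteq> y \<longrightarrow> E x y)"

definition regular_graph :: "'a set \<Rightarrow> ('a \<Rightarrow> 'a \<Rightarrow> bool) \<Rightarrow> nat \<Rightarrow> bool" where
  "regular_graph V E k \<longleftrightarrow> (\<forall>x\<in>V. card (nbrs V E x) = k)"

definition edge_regular ::
  "'a set \<Rightarrow> ('a \<Rightarrow> 'a \<Rightarrow> bool) \<Rightarrow> nat \<Rightarrow> nat \<Rightarrow> nat \<Rightarrow> bool" where
  "edge_regular V E n k lam \<longleftrightarrow> graph V E \<and> card V = n \<and> regular_graph V E k \<and>
     (\<forall>x\<in>V. \<forall>y\<in>V. E x y \<longrightarrow> card (nbrs V E x \<inter> nbrs V E y) = lam)"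

definition clique :: "'a set \<Rightarrow> ('a \<Rightarrow> 'a \<Rightarrow> bool) \<Rightarrow> 'a set \<Rightarrow> bool" where
  "clique V E C \<longleftrightarrow> C \<subseteq> V \<and> (\<forall>x\<in>C. \<forall>y\<in>C. x \<noteq> y \<longrightarrow> E x y)"

definition regular_clique :: "'a set \<Rightarrow> ('a \<Rightarrow> 'a \<Rightarrow> bool) \<Rightarrow> 'a set \<Rightarrow> nat \<Rightarrow> bool" where
  "regular_clique V E C a \<longleftrightarrow> clique V E C \<and>
     (\<forall>x\<in>V - C. card (nbrs V E x \<inter> C) = a)"

definition neumaier ::
  "'a set \<Rightarrow> ('a \<Rightarrow> 'a \<Rightarrow> bool) \<Rightarrow> nat \<Rightarrow> nat \<Rightarrow> nat \<Rightarrow> nat \<Rightarrow> nat \<Rightarrow> bool" where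
  "neumaier V E n k lam a c \<longleftrightarrow> edge_regular V E n k lam \<and> \<not> complete_graph V E \<and>
     (\<exists>C. regular_clique V E C a \<and> card C = c)"

definition strongly_regular ::
  "'a set \<Rightarrow> ('a \<Rightarrow> 'a \<Rightarrow> bool) \<Rightarrow> nat \<Rightarrow> nat \<Rightarrow> nat \<Rightarrow> nat \<Rightarrow> bool" where
  "strongly_regular V E n k lam mu \<longleftrightarrow> graph V E \<and> \<not> complete_graph V E \<and>
     card V = n \<and> regular_graph V E k \<and>
     (\<forall>x\<in>V. \<forall>y\<in>V. E x y \<longrightarrow> card (nbrs V E x \<inter> nbrs V E y) = lam) \<and>
     (\<forall>x\<in>V. \<forall>y\<in>V. x \<noteq> y \<and> \<not> E x y \<longrightarrow> card (nbrs V E x \<inter> nbrs V E y) = mu)"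

definition equitable_partition :: "'a set \<Rightarrow> ('a \<Rightarrow> 'a \<Rightarrow> bool) \<Rightarrow> 'a set set \<Rightarrow> bool" where
  "equitable_partition V E P \<longleftrightarrow> partition_on V P \<and>
     (\<forall>Vi\<in>P. \<forall>Vj\<in>P. \<forall>x\<in>Vi. \<forall>y\<in>Vi. card (nbrs V E x \<inter> Vj) = card (nbrs V E y \<inter> Vj))"

definition automorphism :: "'a set \<Rightarrow> ('a \<Rightarrow> 'a \<Rightarrow> bool) \<Rightarrow> ('a \<Rightarrow> 'a) \<Rightarrow> bool" where
  "automorphism V E f \<longleftrightarrow> bij_betw f V V \<and> (\<forall>u\<in>V. \<forall>v\<in>V. E u v \<longleftrightarrow> E (f u) (f v))"

definition vertex_transitive :: "'a set \<Rightarrow> ('a \<Rightarrow> 'a \<Rightarrow> bool) \<Rightarrow> bool" where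
  "vertex_transitive V E \<longleftrightarrow> (\<forall>x\<in>V. \<forall>y\<in>V. \<exists>f. automorphism V E f \<and> f x = y)"

text \<open>Graph distance: least length of a walk (E is only between vertices of V).\<close>
definition gdist :: "('a \<Rightarrow> 'a \<Rightarrow> bool) \<Rightarrow> 'a \<Rightarrow> 'a \<Rightarrow> nat" where
  "gdist E x y = (LEAST m. (E ^^ m) x y)"

definition diameter :: "'a set \<Rightarrow> ('a \<Rightarrow> 'a \<Rightarrow> bool) \<Rightarrow> nat" where
  "diameter V E = Max {gdist E x y | x y. x \<in> V \<and> y \<in> V}"

end

theory Submission
  imports Defs
begin

text \<open>Around e the vertices split into {e}, C - {e}, S - C and the rest
  W = V - (S \<union> {e}). A vertex of C - {e}, of S - C, of W has respectively 1, 1, 0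
  neighbours in {e} and |C| - 2, a - 1, a neighbours in C - {e}; edge-regularity then
  forces \<lambda> + 2 - |C| resp. \<lambda> + 1 - a neighbours in S - C for the first two parts.
  Since the graph is k-regular, counts into the last part W are determined by the
  other three, so the only missing condition for equitability is that vertices of W
  see a constant number of vertices of S - C. A vertex x of W has
  a + |N(x) \<inter> (S - C)| common neighbours with e, which is \<mu> in a strongly regular
  graph. In a vertex-transitive graph every non-adjacent pair can be moved to a pair
  (e, x) with x in W, so it has at least a > 0 common neighbours (whence diameter 2),
  and the graph is strongly regular exactly when these counts are constant.\<close>

lemma mem_nbrs_iff: "graph V E \<Longrightarrow> y \<in> nbrs V E x \<longleftrightarrow> E x y"
  by (auto simp: graph_def nbrs_def)

lemma nbrs_subset: "nbrs V E x \<subseteq> V"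
  by (auto simp: nbrs_def)

lemma finite_nbrs: "finite V \<Longrightarrow> finite (nbrs V E x)"
  by (simp add: nbrs_def)

lemma card_nbrs_sum_partition:
  assumes "finite V" "partition_on V P"
  shows "card (nbrs V E x) = (\<Sum>Q\<in>P. card (nbrs V E x \<inter> Q))"
proof -
  have "nbrs V E x \<subseteq> \<Union>P"
    using partition_onD1[OF assms(2)] nbrs_subset by metis
  then have "nbrs V E x = (\<Union>Q\<in>P. nbrs V E x \<inter> Q)"
    by blast
  also have "card \<dots> = (\<Sum>Q\<in>P. card (nbrs V E x \<inter> Q))"
  proof (rule card_UN_disjoint)
    show "finite P"
      using assms by (rule finite_elements)
    show "\<forall>Q\<in>P. finite (nbrs V E x \<inter> Q)"
      using finite_nbrs[OF assms(1)] by blast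
    show "\<forall>Q\<in>P. \<forall>R\<in>P. Q \<noteq> R \<longrightarrow> nbrs V E x \<inter> Q \<inter> (nbrs V E x \<inter> R) = {}"
      using disjointD[OF partition_onD2[OF assms(2)]] by blast
  qed
  finally show ?thesis .
qed

lemma equitable_partition_of_regular_graphI:
  assumes "finite V" "regular_graph V E k" "partition_on V P" "Q\<^sub>0 \<in> P"
    and const: "\<And>Q R x y. Q \<in> P \<Longrightarrow> R \<in> P \<Longrightarrow> R \<noteq> Q\<^sub>0 \<Longrightarrow> x \<in> Q \<Longrightarrow> y \<in> Q \<Longrightarrow>
      card (nbrs V E x \<inter> R) = card (nbrs V E y \<inter> R)"
  shows "equitable_partition V E P"
  unfolding equitable_partition_def
proof (intro conjI assms(3) ballI)
  fix Q R x y assume QR: "Q \<in> P" "R \<in> P" and xy: "x \<in> Q" "y \<in> Q"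
  have V: "x \<in> V" "y \<in> V"
    using QR xy partition_onD1[OF assms(3)] by (metis UnionI)+
  have degree: "k = card (nbrs V E z \<inter> Q\<^sub>0) + (\<Sum>R\<in>P - {Q\<^sub>0}. card (nbrs V E z \<inter> R))"
    if "z \<in> V" for z
  proof -
    have "k = card (nbrs V E z)"
      using that assms(2) by (simp add: regular_graph_def)
    also have "\<dots> = (\<Sum>R\<in>P. card (nbrs V E z \<inter> R))"
      by (rule card_nbrs_sum_partition[OF assms(1,3)])
    also have "\<dots> = card (nbrs V E z \<inter> Q\<^sub>0) + (\<Sum>R\<in>P - {Q\<^sub>0}. card (nbrs V E z \<inter> R))"
      by (rule sum.remove[OF finite_elements[OF assms(1,3)] assms(4)])
    finally show ?thesis .
  qed
  have "(\<Sum>R\<in>P - {Q\<^sub>0}. card (nbrs V E x \<inter> R)) = (\<Sum>R\<in>P - {Q\<^sub>0}. card (nbrs V E y \<inter> R))"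
    using const[OF QR(1) _ _ xy] by (intro sum.cong) auto
  then have "card (nbrs V E x \<inter> Q\<^sub>0) = card (nbrs V E y \<inter> Q\<^sub>0)"
    using degree[OF V(1)] degree[OF V(2)] by linarith
  then show "card (nbrs V E x \<inter> R) = card (nbrs V E y \<inter> R)"
    using const[OF QR(1,2) _ xy] by blast
qed

lemma complete_graph_if_universal_vertex:
  assumes "graph V E" "regular_graph V E k" "x \<in> V" "V - {x} \<subseteq> nbrs V E x"
  shows "complete_graph V E"
  unfolding complete_graph_def
proof (intro ballI impI)
  fix y z assume yz: "y \<in> V" "z \<in> V" "y \<noteq> z"
  have fin: "finite V" and irrefl: "\<And>u. \<not> E u u"
    using assms(1) by (auto simp: graph_def)
  have sub: "nbrs V E u \<subseteq> V - {u}" for u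
    using irrefl by (auto simp: nbrs_def)
  then have "nbrs V E x = V - {x}"
    using assms(4) by blast
  then have "card (nbrs V E y) = card (V - {y})"
    using assms(2,3) yz(1) fin by (auto simp: regular_graph_def card_Diff_singleton)
  then have "nbrs V E y = V - {y}"
    using sub fin by (simp add: card_subset_eq)
  then show "E y z"
    using yz by (auto simp: nbrs_def)
qed

lemma regular_clique_nexus_pos:
  assumes "graph V E" "\<not> complete_graph V E" "regular_clique V E C a" "C \<noteq> {}"
  shows "0 < a"
proof -
  have clique: "C \<subseteq> V" "\<And>x y. x \<in> C \<Longrightarrow> y \<in> C \<Longrightarrow> x \<noteq> y \<Longrightarrow> E x y"
    and nexus: "\<And>x. x \<in> V - C \<Longrightarrow> card (nbrs V E x \<inter> C) = a"
    using assms(3) by (auto simp: regular_clique_def clique_def)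
  obtain u w where u: "u \<in> C" and w: "w \<in> V" "w \<notin> C"
    using assms(2,4) clique unfolding complete_graph_def by blast
  have "E\<^sup>*\<^sup>* u w"
    using assms(1) u w clique(1) by (auto simp: graph_def)
  then have "\<exists>x y. x \<in> C \<and> y \<notin> C \<and> E x y"
    using w(2)
  proof (induction rule: rtranclp_induct)
    case base
    then show ?case using u by blast
  next
    case (step y z)
    then show ?case by (cases "y \<in> C") auto
  qed
  then obtain x y where "x \<in> C" "y \<notin> C" "E y x"
    using assms(1) unfolding graph_def by blast
  then have "y \<in> V - C" "x \<in> nbrs V E y \<inter> C"
    using assms(1) clique(1) by (auto simp: graph_def nbrs_def)
  moreover have "finite (nbrs V E y \<inter> C)"
    using assms(1) by (simp add: graph_def finite_nbrs)
  ultimately show ?thesis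
    using nexus card_gt_0_iff by blast
qed

lemma gdist_le: "(E ^^ m) x y \<Longrightarrow> gdist E x y \<le> m"
  unfolding gdist_def by (rule Least_le)

lemma relpowp_gdist: "(E ^^ m) x y \<Longrightarrow> (E ^^ gdist E x y) x y"
  unfolding gdist_def by (rule LeastI)

lemma diameter_eq_2I:
  assumes "graph V E" "\<not> complete_graph V E"
    and common_nbr: "\<And>x y. x \<in> V \<Longrightarrow> y \<in> V \<Longrightarrow> x \<noteq> y \<Longrightarrow> \<not> E x y \<Longrightarrow>
      nbrs V E x \<inter> nbrs V E y \<noteq> {}"
  shows "diameter V E = 2"
proof -
  have walk: "(E ^^ 2) x y" if "x \<in> V" "y \<in> V" "x \<noteq> y" "\<not> E x y" for x y
    using common_nbr[OF that] assms(1)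
    by (auto simp: graph_def nbrs_def numeral_2_eq_2 relcompp_apply)
  have le_2: "gdist E x y \<le> 2" if "x \<in> V" "y \<in> V" for x y
  proof -
    have "(E ^^ 0) x y \<or> (E ^^ 1) x y \<or> (E ^^ 2) x y"
      using walk[OF that] by (cases "x = y") auto
    then show ?thesis
      using gdist_le[of _ E x y] by fastforce
  qed
  obtain x y where xy: "x \<in> V" "y \<in> V" "x \<noteq> y" "\<not> E x y"
    using assms(2) unfolding complete_graph_def by blast
  have "(E ^^ gdist E x y) x y"
    using relpowp_gdist walk[OF xy] .
  then have "gdist E x y \<noteq> 0" "gdist E x y \<noteq> 1"
    using xy by (metis relpowp.simps(1), metis relpowp_1)
  then have "gdist E x y = 2"
    using le_2[OF xy(1,2)] by linarith
  then have "2 \<in> {gdist E x y | x y. x \<in> V \<and> y \<in> V}"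
    using xy(1,2) by force
  moreover have "d \<le> 2" if "d \<in> {gdist E x y | x y. x \<in> V \<and> y \<in> V}" for d
    using that le_2 by force
  ultimately show ?thesis
    unfolding diameter_def by (intro Max_eqI finite_nat_set_iff_bounded_le[THEN iffD2]) auto
qed

lemma automorphism_nbrs:
  assumes "automorphism V E f" "x \<in> V"
  shows "nbrs V E (f x) = f ` nbrs V E x"
proof -
  have "f ` V = V" and adj: "\<And>u v. u \<in> V \<Longrightarrow> v \<in> V \<Longrightarrow> E u v \<longleftrightarrow> E (f u) (f v)"
    using assms(1) by (auto simp: automorphism_def bij_betw_def)
  have "nbrs V E (f x) = {v \<in> f ` V. E (f x) v}"
    using \<open>f ` V = V\<close> by (simp add: nbrs_def)
  also have "\<dots> = f ` {u \<in> V. E (f x) (f u)}"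
    by blast
  also have "\<dots> = f ` nbrs V E x"
    using adj assms(2) by (auto simp: nbrs_def)
  finally show ?thesis .
qed

lemma automorphism_card_common_nbrs:
  assumes "automorphism V E f" "x \<in> V" "y \<in> V"
  shows "card (nbrs V E (f x) \<inter> nbrs V E (f y)) = card (nbrs V E x \<inter> nbrs V E y)"
proof -
  have inj: "inj_on f V"
    using assms(1) by (auto simp: automorphism_def bij_betw_def)
  then have "nbrs V E (f x) \<inter> nbrs V E (f y) = f ` (nbrs V E x \<inter> nbrs V E y)"
    using automorphism_nbrs[OF assms(1)] assms(2,3) inj_on_image_Int[OF inj nbrs_subset nbrs_subset]
    by simp
  then show ?thesis
    using inj_on_subset[OF inj] nbrs_subset by (metis card_image le_infI1)
qed

lemma vertex_transitive_move_to:
  assumes "vertex_transitive V E" "x \<in> V" "y \<in> V" "e \<in> V"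
  obtains y' where "y' \<in> V" "y' = e \<longleftrightarrow> y = x" "E e y' \<longleftrightarrow> E x y"
    "card (nbrs V E x \<inter> nbrs V E y) = card (nbrs V E e \<inter> nbrs V E y')"
proof -
  obtain f where f: "automorphism V E f" "f x = e"
    using assms unfolding vertex_transitive_def by blast
  then have "f y \<in> V" "inj_on f V" "E x y \<longleftrightarrow> E e (f y)"
    using assms(2,3) by (auto simp: automorphism_def bij_betw_def)
  moreover have "f y = e \<longleftrightarrow> y = x"
    using \<open>inj_on f V\<close> f(2) assms(2,3) inj_on_eq_iff by metis
  ultimately show ?thesis
    using that automorphism_card_common_nbrs[OF f(1) assms(2,3)] f(2) by metis
qed

locale neumaier_clique =
  fixes V :: "'a set" and E :: "'a \<Rightarrow> 'a \<Rightarrow> bool"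
    and n k lam a c :: nat and C :: "'a set" and e :: 'a
  assumes neumaier: "neumaier V E n k lam a c"
    and regular_clique: "regular_clique V E C a"
    and e_in_C: "e \<in> C"
begin

abbreviation N :: "'a \<Rightarrow> 'a set" where "N \<equiv> nbrs V E"
abbreviation S :: "'a set" where "S \<equiv> N e"
abbreviation W :: "'a set" where "W \<equiv> V - (S \<union> {e})"

lemma graph: "graph V E"
  and not_complete: "\<not> complete_graph V E"
  and card_V: "card V = n"
  and regular: "regular_graph V E k"
  and card_common_nbrs_adjacent: "x \<in> V \<Longrightarrow> y \<in> V \<Longrightarrow> E x y \<Longrightarrow> card (N x \<inter> N y) = lam"
  using neumaier by (auto simp: neumaier_def edge_regular_def)

lemma finite_V: "finite V"
  using graph by (simp add: graph_def)

lemma finite_N: "finite (N x)"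
  using finite_V by (rule finite_nbrs)

lemma mem_N_iff: "y \<in> N x \<longleftrightarrow> E x y"
  using graph by (rule mem_nbrs_iff)

lemma adj_sym: "E x y \<Longrightarrow> E y x"
  and adj_irrefl: "\<not> E x x"
  and adj_in_V: "E x y \<Longrightarrow> y \<in> V"
  using graph by (auto simp: graph_def)

lemma degree: "x \<in> V \<Longrightarrow> card (N x) = k"
  using regular by (simp add: regular_graph_def)

lemma C_sub_V: "C \<subseteq> V"
  and clique_adj: "x \<in> C \<Longrightarrow> y \<in> C \<Longrightarrow> x \<noteq> y \<Longrightarrow> E x y"
  and card_nbrs_in_C: "x \<in> V \<Longrightarrow> x \<notin> C \<Longrightarrow> card (N x \<inter> C) = a"
  using regular_clique by (auto simp: regular_clique_def clique_def)

lemma finite_C: "finite C"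
  using C_sub_V finite_V finite_subset by blast

lemma e_in_V: "e \<in> V"
  using C_sub_V e_in_C by blast

lemma nexus_pos: "0 < a"
  using regular_clique_nexus_pos[OF graph not_complete regular_clique] e_in_C by blast

lemma e_notin_S: "e \<notin> S"
  by (simp add: mem_N_iff adj_irrefl)

lemma C_minus_e_sub_S: "C - {e} \<subseteq> S"
  using clique_adj[OF e_in_C] mem_N_iff by blast

lemma W_iff: "x \<in> W \<longleftrightarrow> x \<in> V \<and> x \<noteq> e \<and> \<not> E x e"
  by (auto simp: mem_N_iff dest: adj_sym)

lemma W_disjoint_C: "x \<in> W \<Longrightarrow> x \<notin> C"
  using C_minus_e_sub_S by blast

lemma W_nonempty: "W \<noteq> {}"
  using complete_graph_if_universal_vertex[OF graph regular e_in_V] not_complete by blast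

lemma C_minus_e_nonempty: "C - {e} \<noteq> {}"
proof
  assume "C - {e} = {}"
  then have "C = {e}"
    using e_in_C by blast
  obtain w where w: "w \<in> W"
    using W_nonempty by blast
  then have "card (N w \<inter> {e}) = a"
    using card_nbrs_in_C W_disjoint_C \<open>C = {e}\<close> by blast
  moreover have "N w \<inter> {e} = {}"
    using w adj_sym by (auto simp: W_iff mem_N_iff)
  ultimately show False
    using nexus_pos by simp
qed

text \<open>If S were contained in C, the degree k = |S| would be at most |C| - 1; but a clique
  vertex adjacent to a vertex outside S \<union> {e} has at least |C| neighbours.\<close>
lemma S_minus_C_nonempty: "S - C \<noteq> {}"
proof
  assume "S - C = {}"
  then have "S \<subseteq> C - {e}"
    using e_notin_S by blast
  then have "k \<le> card C - 1"
    using degree[OF e_in_V] card_mono[of "C - {e}" S] finite_C e_in_C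
    by (simp add: card_Diff_singleton)
  obtain w where w: "w \<in> W"
    using W_nonempty by blast
  then have "N w \<inter> C \<noteq> {}"
    using card_nbrs_in_C W_disjoint_C nexus_pos by fastforce
  then obtain y where y: "y \<in> C" "E w y"
    by (auto simp: mem_N_iff)
  have "card C > 0"
    using finite_C y(1) card_gt_0_iff by blast
  have "insert w (C - {y}) \<subseteq> N y"
    using y clique_adj[OF y(1)] adj_sym mem_N_iff by blast
  then have "card (insert w (C - {y})) \<le> k"
    using degree C_sub_V y(1) card_mono[OF finite_N] by fastforce
  moreover have "card (insert w (C - {y})) = card C"
    using finite_C y(1) W_disjoint_C[OF w] \<open>card C > 0\<close> by (simp add: card_Diff_singleton)
  ultimately show False
    using \<open>k \<le> card C - 1\<close> \<open>card C > 0\<close> by linarith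
qed

lemma partition: "partition_on V {{e}, C - {e}, S - C, W}"
proof (rule partition_onI)
  show "\<Union>{{e}, C - {e}, S - C, W} = V"
    using e_in_V C_sub_V nbrs_subset[of V E e] by auto
  show "disjnt p q" if "p \<in> {{e}, C - {e}, S - C, W}" "q \<in> {{e}, C - {e}, S - C, W}" "p \<noteq> q"
    for p q
  proof -
    have "disjnt {e} (C - {e})" "disjnt {e} (S - C)" "disjnt {e} W"
      "disjnt (C - {e}) (S - C)" "disjnt (C - {e}) W" "disjnt (S - C) W"
      using e_notin_S C_minus_e_sub_S by (auto simp: disjnt_def)
    then show ?thesis
      using that disjnt_sym by blast
  qed
  show "{} \<notin> {{e}, C - {e}, S - C, W}"
    using C_minus_e_nonempty S_minus_C_nonempty W_nonempty by auto
qed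

lemma card_N_inter_S:
  "card (N x \<inter> S) = card (N x \<inter> (C - {e})) + card (N x \<inter> (S - C))"
proof -
  have "N x \<inter> S = (N x \<inter> (C - {e})) \<union> (N x \<inter> (S - C))"
    using C_minus_e_sub_S e_notin_S by auto
  moreover have "(N x \<inter> (C - {e})) \<inter> (N x \<inter> (S - C)) = {}"
    by auto
  ultimately show ?thesis
    using finite_N by (simp add: card_Un_disjoint)
qed

lemma card_nbrs_parts_C_minus_e:
  assumes x: "x \<in> C - {e}"
  shows "card (N x \<inter> {e}) = 1" "card (N x \<inter> (C - {e})) = card C - 2"
    "card (N x \<inter> (S - C)) = lam + 2 - card C"
proof -
  have xe: "E x e"
    using x e_in_C clique_adj by blast
  then show "card (N x \<inter> {e}) = 1"
    by (simp add: mem_N_iff)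
  have "N x \<inter> (C - {e}) = C - {e, x}"
    using x clique_adj[of x] adj_irrefl by (auto simp: mem_N_iff)
  moreover have "card (C - {e, x}) = card C - 2"
    using x e_in_C finite_C by (subst card_Diff_subset) auto
  ultimately show in_C: "card (N x \<inter> (C - {e})) = card C - 2"
    by simp
  have "card (N x \<inter> S) = lam"
    using card_common_nbrs_adjacent[OF _ e_in_V xe] x C_sub_V by blast
  moreover have "2 \<le> card C"
    using card_mono[OF finite_C, of "{e, x}"] x e_in_C by auto
  ultimately show "card (N x \<inter> (S - C)) = lam + 2 - card C"
    using card_N_inter_S[of x] in_C by linarith
qed

lemma card_nbrs_parts_S_minus_C:
  assumes x: "x \<in> S - C"
  shows "card (N x \<inter> {e}) = 1" "card (N x \<inter> (C - {e})) = a - 1"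
    "card (N x \<inter> (S - C)) = lam + 1 - a"
proof -
  have xV: "x \<in> V" and xe: "E x e"
    using x adj_in_V adj_sym by (auto simp: mem_N_iff)
  then show "card (N x \<inter> {e}) = 1"
    by (simp add: mem_N_iff)
  have "N x \<inter> C = insert e (N x \<inter> (C - {e}))"
    using xe e_in_C by (auto simp: mem_N_iff)
  then have "a = card (N x \<inter> (C - {e})) + 1"
    using card_nbrs_in_C[OF xV] x finite_N by simp
  then show in_C: "card (N x \<inter> (C - {e})) = a - 1"
    by simp
  have "card (N x \<inter> S) = lam"
    using card_common_nbrs_adjacent[OF xV e_in_V xe] .
  then show "card (N x \<inter> (S - C)) = lam + 1 - a"
    using card_N_inter_S[of x] \<open>a = _\<close> by linarith
qed

lemma card_nbrs_parts_W:
  assumes x: "x \<in> W"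
  shows "card (N x \<inter> {e}) = 0" "card (N x \<inter> (C - {e})) = a"
proof -
  have "N x \<inter> {e} = {}" "N x \<inter> (C - {e}) = N x \<inter> C"
    using x adj_sym by (auto simp: mem_N_iff)
  then show "card (N x \<inter> {e}) = 0" "card (N x \<inter> (C - {e})) = a"
    using x card_nbrs_in_C W_disjoint_C by auto
qed

lemma card_common_nbrs_W: "x \<in> W \<Longrightarrow> card (S \<inter> N x) = a + card (N x \<inter> (S - C))"
  using card_N_inter_S[of x] card_nbrs_parts_W[of x] by (simp add: Int_commute)

lemma equitable_partition_if_W_constant:
  assumes W_const: "\<And>x. x \<in> W \<Longrightarrow> card (N x \<inter> (S - C)) = m"
  shows "equitable_partition V E {{e}, C - {e}, S - C, W}"
proof (rule equitable_partition_of_regular_graphI[OF finite_V regular partition])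
  show "W \<in> {{e}, C - {e}, S - C, W}"
    by simp
  fix Q R x y
  assume Q: "Q \<in> {{e}, C - {e}, S - C, W}" and "R \<in> {{e}, C - {e}, S - C, W}" "R \<noteq> W"
    and xy: "x \<in> Q" "y \<in> Q"
  then have R: "R = {e} \<or> R = C - {e} \<or> R = S - C"
    by blast
  from Q consider "Q = {e}" | "Q = C - {e}" | "Q = S - C" | "Q = W"
    by blast
  then show "card (N x \<inter> R) = card (N y \<inter> R)"
  proof cases
    case 1
    then show ?thesis using xy by simp
  next
    case 2
    then show ?thesis
      using R xy card_nbrs_parts_C_minus_e[of x] card_nbrs_parts_C_minus_e[of y] by auto
  next
    case 3
    then show ?thesis
      using R xy card_nbrs_parts_S_minus_C[of x] card_nbrs_parts_S_minus_C[of y] by auto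
  next
    case 4
    then show ?thesis
      using R xy card_nbrs_parts_W[of x] card_nbrs_parts_W[of y] W_const by auto
  qed
qed

lemma card_nbrs_W_S_minus_C_if_srg:
  assumes "strongly_regular V E n' k' lam' \<mu>" "x \<in> W"
  shows "card (N x \<inter> (S - C)) = \<mu> - a"
proof -
  have "x \<in> V" "e \<noteq> x" "\<not> E e x"
    using assms(2) by (auto simp: mem_N_iff)
  then have "card (S \<inter> N x) = \<mu>"
    using assms(1) e_in_V unfolding strongly_regular_def by blast
  then show ?thesis
    using card_common_nbrs_W[OF assms(2)] by simp
qed

lemma vertex_transitive_card_common_nbrs:
  assumes "vertex_transitive V E" "x \<in> V" "y \<in> V" "x \<noteq> y" "\<not> E x y"
  obtains w where "w \<in> W" "card (N x \<inter> N y) = a + card (N w \<inter> (S - C))"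
proof -
  obtain w where "w \<in> V" "w = e \<longleftrightarrow> y = x" "E e w \<longleftrightarrow> E x y"
    and common: "card (N x \<inter> N y) = card (S \<inter> N w)"
    using vertex_transitive_move_to[OF assms(1-3) e_in_V] by blast
  then have "w \<in> W"
    using assms(4,5) adj_sym W_iff by blast
  then show ?thesis
    using that common card_common_nbrs_W by simp
qed

lemma diameter_eq_2_if_vertex_transitive:
  assumes "vertex_transitive V E"
  shows "diameter V E = 2"
proof (rule diameter_eq_2I[OF graph not_complete])
  fix x y assume "x \<in> V" "y \<in> V" "x \<noteq> y" "\<not> E x y"
  then obtain w where "card (N x \<inter> N y) = a + card (N w \<inter> (S - C))"
    using vertex_transitive_card_common_nbrs[OF assms] by blast
  then show "N x \<inter> N y \<noteq> {}"
    using nexus_pos by force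
qed

lemma strongly_regular_if_W_constant:
  assumes "vertex_transitive V E"
    and W_const: "\<And>x. x \<in> W \<Longrightarrow> card (N x \<inter> (S - C)) = m"
  shows "strongly_regular V E n k lam (a + m)"
proof -
  have "card (N x \<inter> N y) = a + m" if "x \<in> V" "y \<in> V" "x \<noteq> y" "\<not> E x y" for x y
    using vertex_transitive_card_common_nbrs[OF assms(1) that] W_const by metis
  then show ?thesis
    unfolding strongly_regular_def
    using graph not_complete card_V regular card_common_nbrs_adjacent by blast
qed

end

theorem theorem3p3:
  fixes V :: "'a set" and E :: "'a \<Rightarrow> 'a \<Rightarrow> bool"
    and n k lam a c :: nat and C :: "'a set" and e :: 'a
  assumes "neumaier V E n k lam a c"
    and "regular_clique V E C a"
    and "e \<in> C"
  defines "S \<equiv> nbrs V E e"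
  shows
    "((\<exists>r. \<forall>x\<in>S - C. card (nbrs V E x \<inter> (S - C)) = r) \<and>
     ((\<exists>m. \<forall>x\<in>V - (S \<union> {e}). card (nbrs V E x \<inter> (S - C)) = m) \<longrightarrow>
        equitable_partition V E {{e}, C - {e}, S - C, V - (S \<union> {e})})) \<and>
    ((\<exists>n' k' lam' mu. strongly_regular V E n' k' lam' mu) \<longrightarrow>
       (\<exists>m. \<forall>x\<in>V - (S \<union> {e}). card (nbrs V E x \<inter> (S - C)) = m)) \<and>
    (vertex_transitive V E \<longrightarrow>
       diameter V E = 2 \<and>
       ((\<exists>n' k' lam' mu. strongly_regular V E n' k' lam' mu) \<longleftrightarrow>
        (\<exists>m. \<forall>x\<in>V - (S \<union> {e}). card (nbrs V E x \<inter> (S - C)) = m)))"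
proof -
  interpret neumaier_clique V E n k lam a c C e
    using assms(1-3) by unfold_locales
  have "\<exists>m. \<forall>x\<in>V - (S \<union> {e}). card (nbrs V E x \<inter> (S - C)) = m"
    if "strongly_regular V E n' k' lam' mu" for n' k' lam' mu
    unfolding S_def using card_nbrs_W_S_minus_C_if_srg[OF that] by blast
  then show ?thesis
    unfolding S_def
    using card_nbrs_parts_S_minus_C(3) equitable_partition_if_W_constant
      diameter_eq_2_if_vertex_transitive strongly_regular_if_W_constant
    by blast
qed

end
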